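(* Let $M\ge3$, $N\ge3$ and let $\phi\in\{0,1\}^{E(\mathbb{L}_1)}$ be a primal contour configuration. Assume that $\partial B^*_{M,N}$ crosses present edges of $\mathbb{L}_1$ an even number of times. Then one can change the states of the edges of $B_{M-1,N-1}$ (leaving all other edges unchanged) in such a way that in the resulting configuration all present edges of $\mathbb{L}_1$ crossing $\partial B^*_{M,N}$ belong to the same contour, and each vertex of $B_{M-1,N-1}$ has an even number of incident present edges.
   Context: Let $\mathbb{L}_1$ be the graph with vertices $(m-\tfrac12,n+\tfrac12)$, $m,n$ both even, and $\mathbb{L}_2$ the graph with vertices $(m-\tfrac12,n+\tfrac12)$, $m,n$ both odd; in each, two vertices are joined by an edge iff at Euclidean distance $2$; faces of each are squares of side $2$. A primal contour configuration is $\phi\in\{0,1\}^{E(\mathbb{L}_1)}$ in which every vertex of $\mathbb{L}_1$ has an even number of incident present edges (edges with value $1$); a contour is a connected component of the set of present edges. Boxes of $\mathbb{L}_2$: $B^*_{1,1}$ is the face of $\mathbb{L}_2$ containing the origin; for $n$ odd (resp. even), $B^*_{m,n+1}$ is obtained from $B^*_{m,n}$ by adding a column of $m$ faces of $\mathbb{L}_2$ to its right (resp. left); for $m$ odd (resp. even), $B^*_{m+1,n}$ is obtained from $B^*_{m,n}$ by adding a row of $n$ faces of $\mathbb{L}_2$ at its bottom (resp. top). Thus $B^*_{M,N}$ is a rectangle of $M$ rows and $N$ columns of faces of $\mathbb{L}_2$, with boundary $\partial B^*_{M,N}$. $B_{M-1,N-1}$ denotes the subgraph of $\mathbb{L}_1$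 enclosed by $\partial B^*_{M,N}$ (the vertices of $\mathbb{L}_1$ in the interior of the rectangle and the edges of $\mathbb{L}_1$ joining two of them). An edge of $\mathbb{L}_1$ crosses $\partial B^*_{M,N}$ if it joins a vertex inside to a vertex outside the rectangle. *)

theory Defs
  imports Main
begin

text \<open>A vertex of L1 or L2 at the point (m - 1/2, n + 1/2) is encoded by the
integer pair (m, n).  L1: m, n both even.  L2: m, n both odd.\<close>

definition L1_vertex :: "int \<times> int \<Rightarrow> bool" where
  "L1_vertex v \<longleftrightarrow> even (fst v) \<and> even (snd v)"

definition L2_vertex :: "int \<times> int \<Rightarrow> bool" where
  "L2_vertex v \<longleftrightarrow> odd (fst v) \<and> odd (snd v)"

text \<open>Edges of L1: unordered pairs of L1 vertices at Euclidean distance 2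
(squared distance 4; the shift by (-1/2, 1/2) does not affect distances).\<close>

definition L1_edge :: "(int \<times> int) set \<Rightarrow> bool" where
  "L1_edge e \<longleftrightarrow> (\<exists>u v. e = {u, v} \<and> L1_vertex u \<and> L1_vertex v \<and>
      (fst u - fst v)^2 + (snd u - snd v)^2 = 4)"

text \<open>A configuration phi in {0,1}^E(L1) is represented by its set P of present
edges (the edges with value 1).  Degree of a vertex in P:\<close>

definition deg :: "(int \<times> int) set set \<Rightarrow> int \<times> int \<Rightarrow> nat" where
  "deg P v = card {e \<in> P. v \<in> e}"

definition primal_contour_config :: "(int \<times> int) set set \<Rightarrow> bool" where
  "primal_contour_config P \<longleftrightarrow>
     (\<forall>e\<in>P. L1_edge e) \<and> (\<forall>v. L1_vertex v \<longrightarrow> even (deg P v))"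

text \<open>Two present edges lie in the same contour (connected component of the
set of present edges) iff they are linked by a chain of present edges in which
consecutive edges share a vertex.\<close>

definition same_contour :: "(int \<times> int) set set \<Rightarrow> (int \<times> int) set \<Rightarrow> (int \<times> int) set \<Rightarrow> bool" where
  "same_contour P e f \<longleftrightarrow> e \<in> P \<and> f \<in> P \<and>
     (e, f) \<in> {(a, b). a \<in> P \<and> b \<in> P \<and> a \<inter> b \<noteq> {}}\<^sup>*"

text \<open>A face of L2 is encoded by its lower-left corner (p, q), an L2 vertex; it is
the square [p-1/2, p+3/2] x [q+1/2, q+5/2].  The face containing the origin is
the one with corner (-1, -1).\<close>

definition add_right :: "(int \<times> int) set \<Rightarrow> (int \<times> int) set" where
  "add_right B = B \<union> {(p + 2, q) | p q. (p, q) \<in> B \<and> p = Max (fst ` B)}"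

definition add_left :: "(int \<times> int) set \<Rightarrow> (int \<times> int) set" where
  "add_left B = B \<union> {(p - 2, q) | p q. (p, q) \<in> B \<and> p = Min (fst ` B)}"

definition add_top :: "(int \<times> int) set \<Rightarrow> (int \<times> int) set" where
  "add_top B = B \<union> {(p, q + 2) | p q. (p, q) \<in> B \<and> q = Max (snd ` B)}"

definition add_bottom :: "(int \<times> int) set \<Rightarrow> (int \<times> int) set" where
  "add_bottom B = B \<union> {(p, q - 2) | p q. (p, q) \<in> B \<and> q = Min (snd ` B)}"

text \<open>box M N is the set of faces of B*_{M,N} (M rows, N columns):
B*_{1,1} is the face containing the origin; B*_{m+1,n} adds a row at the bottom
(m odd) or top (m even); B*_{m,n+1} adds a column to the right (n odd) or left
(n even).  (The paper's two growth rules commute; here we first grow rows in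
the first column, then columns.)\<close>

fun box :: "nat \<Rightarrow> nat \<Rightarrow> (int \<times> int) set" where
  "box 0 n = {}"
| "box (Suc m) 0 = {}"
| "box (Suc 0) (Suc 0) = {(-1, -1)}"
| "box (Suc (Suc m)) (Suc 0) =
     (if odd (Suc m) then add_bottom (box (Suc m) (Suc 0)) else add_top (box (Suc m) (Suc 0)))"
| "box (Suc m) (Suc (Suc n)) =
     (if odd (Suc n) then add_right (box (Suc m) (Suc n)) else add_left (box (Suc m) (Suc n)))"

text \<open>An L1 vertex (m,n), i.e. the point (m-1/2, n+1/2), lies in the interior of
the rectangle B*_{M,N} iff it lies in the interior of one of its faces (L1
vertices never lie on lines of L2): p-1/2 < m-1/2 < p+3/2, q+1/2 < n+1/2 < q+5/2.\<close>

definition inside_box :: "nat \<Rightarrow> nat \<Rightarrow> int \<times> int \<Rightarrow> bool" where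
  "inside_box M N v \<longleftrightarrow> L1_vertex v \<and>
     (\<exists>(p, q) \<in> box M N. p < fst v \<and> fst v < p + 2 \<and> q < snd v \<and> snd v < q + 2)"

text \<open>Edges of B_{M-1,N-1}: L1 edges joining two vertices inside the rectangle.\<close>

definition box_edge :: "nat \<Rightarrow> nat \<Rightarrow> (int \<times> int) set \<Rightarrow> bool" where
  "box_edge M N e \<longleftrightarrow> L1_edge e \<and> (\<forall>v\<in>e. inside_box M N v)"

definition crossing_edge :: "nat \<Rightarrow> nat \<Rightarrow> (int \<times> int) set \<Rightarrow> bool" where
  "crossing_edge M N e \<longleftrightarrow> L1_edge e \<and>
     (\<exists>u\<in>e. inside_box M N u) \<and> (\<exists>v\<in>e. \<not> inside_box M N v)"

end

theory Submission
  imports Defs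
begin

text \<open>
  The L1 vertices inside B*_{M,N} form an N x M grid graph, and a present edge crossing the
  boundary joins a boundary vertex of this grid to a vertex outside.  Call a grid vertex a
  terminal if an odd number of present crossing edges end at it.  There is an even number of
  terminals because the number of crossings is even, and every grid vertex met by a crossing
  edge is a terminal or a corner, since a non-corner vertex has at most one neighbour outside
  the box.  It therefore suffices to find a subgraph of the grid whose odd-degree vertices are
  exactly the terminals and which connects all of them and the corners: installing it in place
  of the edges inside the box makes every inner degree even and links all crossing edges.

  Such connected T-joins exist in every n x m grid with n, m \<ge> 3 for every even set T of
  boundary vertices.  For the 3 x 3 grid this is checked by computer.  A grid is grown by one row
  as follows: the new top row is joined to the old top row by rungs at all positions except
  possibly position 1, and carries the path edges whose prefix parities give the right degrees
  in the new row.  The rungs shift the parity requirements down to the old top row, and the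
  smaller grid, applied to the shifted terminals, connects the feet of the rungs with the rest
  of S.  Transposing the grid handles growth in the other direction.
\<close>

section \<open>Connected T-joins in grid graphs\<close>

type_synonym grid_edges = "int \<Rightarrow> int \<Rightarrow> bool"

definition grid_vertex :: "int \<Rightarrow> int \<Rightarrow> int \<times> int \<Rightarrow> bool" where
  "grid_vertex n m x \<longleftrightarrow> 0 \<le> fst x \<and> fst x < n \<and> 0 \<le> snd x \<and> snd x < m"

definition grid_boundary :: "int \<Rightarrow> int \<Rightarrow> int \<times> int \<Rightarrow> bool" where
  "grid_boundary n m x \<longleftrightarrow> grid_vertex n m x \<and> (fst x = 0 \<or> fst x = n - 1 \<or> snd x = 0 \<or> snd x = m - 1)"

definition grid_corner :: "int \<Rightarrow> int \<Rightarrow> int \<times> int \<Rightarrow> bool" where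
  "grid_corner n m x \<longleftrightarrow> grid_vertex n m x \<and> (fst x = 0 \<or> fst x = n - 1) \<and> (snd x = 0 \<or> snd x = m - 1)"

text \<open>A subgraph of the grid is given by two predicates: h i j selects the edge
  from (i, j) to (i + 1, j) and v i j the edge from (i, j) to (i, j + 1).\<close>

definition grid_subgraph :: "int \<Rightarrow> int \<Rightarrow> grid_edges \<Rightarrow> grid_edges \<Rightarrow> bool" where
  "grid_subgraph n m h v \<longleftrightarrow>
     (\<forall>i j. h i j \<longrightarrow> 0 \<le> i \<and> i + 1 < n \<and> 0 \<le> j \<and> j < m) \<and>
     (\<forall>i j. v i j \<longrightarrow> 0 \<le> i \<and> i < n \<and> 0 \<le> j \<and> j + 1 < m)"

fun grid_degree :: "grid_edges \<Rightarrow> grid_edges \<Rightarrow> int \<times> int \<Rightarrow> nat" where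
  "grid_degree h v (i, j) = of_bool (h i j) + of_bool (h (i - 1) j) + of_bool (v i j) + of_bool (v i (j - 1))"

declare grid_degree.simps [simp del]

definition grid_adj :: "grid_edges \<Rightarrow> grid_edges \<Rightarrow> ((int \<times> int) \<times> (int \<times> int)) set" where
  "grid_adj h v = {((i, j), (i', j')).
     (i' = i + 1 \<and> j' = j \<and> h i j) \<or> (i' = i - 1 \<and> j' = j \<and> h i' j) \<or>
     (i' = i \<and> j' = j + 1 \<and> v i j) \<or> (i' = i \<and> j' = j - 1 \<and> v i j')}"

definition connected_T_join ::
    "int \<Rightarrow> int \<Rightarrow> (int \<times> int) set \<Rightarrow> (int \<times> int) set \<Rightarrow> grid_edges \<Rightarrow> grid_edges \<Rightarrow> bool" where
  "connected_T_join n m T S h v \<longleftrightarrow> grid_subgraph n m h v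
     \<and> (\<forall>x. grid_vertex n m x \<longrightarrow> (odd (grid_degree h v x) \<longleftrightarrow> x \<in> T))
     \<and> (\<forall>x\<in>S. \<forall>y\<in>S. (x, y) \<in> (grid_adj h v)\<^sup>*)"

definition boundary_joinable :: "int \<Rightarrow> int \<Rightarrow> bool" where
  "boundary_joinable n m \<longleftrightarrow> (\<forall>T S. T \<subseteq> Collect (grid_boundary n m) \<longrightarrow> even (card T)
     \<longrightarrow> S \<subseteq> T \<union> Collect (grid_corner n m) \<longrightarrow> (\<exists>h v. connected_T_join n m T S h v))"

lemma sym_grid_adj: "sym (grid_adj h v)"
  unfolding grid_adj_def sym_def by auto

lemma grid_reach_sym: "(x, y) \<in> (grid_adj h v)\<^sup>* \<Longrightarrow> (y, x) \<in> (grid_adj h v)\<^sup>*"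
  using sym_rtrancl[OF sym_grid_adj] by (rule symD)

lemma grid_reach_mono:
  assumes "(x, y) \<in> (grid_adj h v)\<^sup>*" "\<And>i j. h i j \<Longrightarrow> h' i j" "\<And>i j. v i j \<Longrightarrow> v' i j"
  shows "(x, y) \<in> (grid_adj h' v')\<^sup>*"
proof -
  have "grid_adj h v \<subseteq> grid_adj h' v'"
    using assms(2,3) unfolding grid_adj_def by auto
  then show ?thesis using assms(1) rtrancl_mono by blast
qed

lemma grid_adj_right: "h i j \<Longrightarrow> ((i, j), (i + 1, j)) \<in> grid_adj h v"
  and grid_adj_left: "h (i - 1) j \<Longrightarrow> ((i, j), (i - 1, j)) \<in> grid_adj h v"
  and grid_adj_down: "v i (j - 1) \<Longrightarrow> ((i, j), (i, j - 1)) \<in> grid_adj h v"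
  unfolding grid_adj_def by auto

lemma even_card_sym_diff_iff:
  assumes "finite A" "finite B"
  shows "even (card (sym_diff A B)) \<longleftrightarrow> even (card A + card B)"
proof -
  have "card (sym_diff A B) = card (A - B) + card (B - A)"
    by (rule card_Un_disjoint) (use assms in auto)
  moreover have "card A = card (A - B) + card (A \<inter> B)" "card B = card (B - A) + card (A \<inter> B)"
    using assms by (metis add.commute card_Int_Diff Int_commute)+
  ultimately show ?thesis by presburger
qed

definition odd_prefix :: "int set \<Rightarrow> int \<Rightarrow> bool" where
  "odd_prefix R i \<longleftrightarrow> odd (card {k\<in>R. k \<le> i})"

lemma odd_prefix_step:
  assumes "finite R"
  shows "odd_prefix R i \<longleftrightarrow> odd_prefix R (i - 1) \<noteq> (i \<in> R)"
proof -
  have "{k\<in>R. k \<le> i} = {k\<in>R. k \<le> i - 1} \<union> (if i \<in> R then {i} else {})"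
    by (auto simp: less_le)
  then show ?thesis
    using assms unfolding odd_prefix_def by (auto simp: less_le)
qed

lemma odd_prefix_range:
  assumes "R \<subseteq> {0..<n}" "even (card R)" "odd_prefix R i"
  shows "0 \<le> i \<and> i + 1 < n"
proof (rule ccontr)
  assume "\<not> (0 \<le> i \<and> i + 1 < n)"
  then have "{k\<in>R. k \<le> i} = {} \<or> {k\<in>R. k \<le> i} = R"
    using assms(1) by fastforce
  then show False
    using assms(2,3) unfolding odd_prefix_def by (metis card.empty even_zero)
qed

text \<open>The path 0, ..., n - 1 with the edges i--(i + 1) for p i, together with pendant rungs at
  the positions in V, has odd-degree set A.  The rung at 1 is dropped when the parity requires it.\<close>

lemma path_with_rungs:
  fixes n :: int
  assumes "n \<ge> 3" "A \<subseteq> {0..<n}"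
  obtains V p where "V \<subseteq> {0..<n}" "{0..<n} - {1} \<subseteq> V" "even (card V + card A)"
    "\<And>i. p i \<Longrightarrow> 0 \<le> i \<and> i + 1 < n"
    "\<And>i. odd (of_bool (p i) + of_bool (p (i - 1)) + of_bool (i \<in> V) :: nat) \<longleftrightarrow> i \<in> A"
proof -
  define V where "V = {0..<n} - (if odd (card A + nat n) then {1} else {})"
  define R where "R = sym_diff A V"
  have finA: "finite A" using assms(2) finite_subset by blast
  have "card V = (if odd (card A + nat n) then nat n - 1 else nat n)"
    using assms(1) unfolding V_def by (auto simp: card_Diff_singleton)
  then have parity: "even (card V + card A)"
    using assms(1) by auto
  have "R \<subseteq> {0..<n}" "even (card R)"
    using assms(2) parity even_card_sym_diff_iff[OF finA, of V]
    unfolding R_def V_def by (auto simp: add.commute)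
  then have "R \<subseteq> {0..<n}" "even (card R)" "finite R"
    using finite_subset by auto
  show thesis
  proof (rule that[of V "odd_prefix R"])
    show "\<And>i. odd_prefix R i \<Longrightarrow> 0 \<le> i \<and> i + 1 < n"
      using odd_prefix_range \<open>R \<subseteq> {0..<n}\<close> \<open>even (card R)\<close> by blast
    show "odd (of_bool (odd_prefix R i) + of_bool (odd_prefix R (i - 1)) + of_bool (i \<in> V) :: nat)
        \<longleftrightarrow> i \<in> A"
      for i using odd_prefix_step[OF \<open>finite R\<close>, of i] unfolding R_def by auto
  qed (use parity in \<open>auto simp: V_def\<close>)
qed

lemma finite_grid_vertices: "finite (Collect (grid_vertex n m))"
  by (rule finite_subset[of _ "{0..<n} \<times> {0..<m}"]) (auto simp: grid_vertex_def)

section \<open>Adding a row\<close>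

text \<open>Rungs from row m - 2 up to the new row m - 1 flip the parity at their lower ends.\<close>

definition lower_terminals :: "int \<Rightarrow> (int \<times> int) set \<Rightarrow> int set \<Rightarrow> (int \<times> int) set" where
  "lower_terminals m T V = sym_diff {x\<in>T. snd x < m - 1} ((\<lambda>i. (i, m - 2)) ` V)"

definition lower_connected :: "int \<Rightarrow> (int \<times> int) set \<Rightarrow> int set \<Rightarrow> (int \<times> int) set" where
  "lower_connected m S V = {x\<in>S. snd x < m - 2} \<union> (\<lambda>i. (i, m - 2)) ` V"

lemma lower_terminals_boundary:
  assumes "T \<subseteq> Collect (grid_boundary n m)" "V \<subseteq> {0..<n}" "m \<ge> 2"
  shows "lower_terminals m T V \<subseteq> Collect (grid_boundary n (m - 1))"
  using assms unfolding lower_terminals_def grid_boundary_def grid_vertex_def by auto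

lemma even_card_lower_terminals:
  assumes "T \<subseteq> Collect (grid_vertex n m)" "even (card T)" "finite V"
    and "even (card V + card {i. (i, m - 1) \<in> T})"
  shows "even (card (lower_terminals m T V))"
proof -
  let ?low = "{x\<in>T. snd x < m - 1}"
  have "finite T"
    using assms(1) finite_grid_vertices finite_subset by blast
  have "T - {x. snd x < m - 1} = (\<lambda>i. (i, m - 1)) ` {i. (i, m - 1) \<in> T}"
  proof (intro set_eqI iffI)
    fix x assume x: "x \<in> T - {x. snd x < m - 1}"
    then have "x = (fst x, m - 1)"
      using assms(1) unfolding grid_vertex_def by (auto simp: prod_eq_iff)
    with x show "x \<in> (\<lambda>i. (i, m - 1)) ` {i. (i, m - 1) \<in> T}"
      by (metis (mono_tags) DiffD1 image_eqI mem_Collect_eq)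
  qed auto
  then have "card T = card ?low + card {i. (i, m - 1) \<in> T}"
    using card_Int_Diff[OF \<open>finite T\<close>, of "{x. snd x < m - 1}"]
    by (simp add: Int_def card_image inj_on_def)
  moreover have "card ((\<lambda>i. (i, m - 2)) ` V) = card V"
    by (simp add: card_image inj_on_def)
  ultimately show ?thesis
    using assms(2,4) even_card_sym_diff_iff[of ?low "(\<lambda>i. (i, m - 2)) ` V"] \<open>finite T\<close> \<open>finite V\<close>
    unfolding lower_terminals_def by auto
qed

lemma lower_connected_subset:
  assumes "S \<subseteq> T \<union> Collect (grid_corner n m)" "T \<subseteq> Collect (grid_boundary n m)"
    and "V \<subseteq> {0..<n}" "{0..<n} - {1} \<subseteq> V" "m \<ge> 4"
  shows "lower_connected m S V \<subseteq> lower_terminals m T V \<union> Collect (grid_corner n (m - 1))"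
proof
  fix x assume x: "x \<in> lower_connected m S V"
  show "x \<in> lower_terminals m T V \<union> Collect (grid_corner n (m - 1))"
  proof (cases "snd x < m - 2")
    case True
    then have "x \<in> T \<or> grid_corner n m x"
      using x assms(1) unfolding lower_connected_def by auto
    then show ?thesis
      using True unfolding lower_terminals_def grid_corner_def grid_vertex_def by auto
  next
    case False
    then obtain i where i: "x = (i, m - 2)" "i \<in> V"
      using x unfolding lower_connected_def by auto
    show ?thesis
    proof (cases "i = 0 \<or> i = n - 1")
      case True
      then show ?thesis
        using i assms(3,5) unfolding grid_corner_def grid_vertex_def by auto
    next
      case False
      then have "x \<notin> T"
        using i assms(2,5) unfolding grid_boundary_def by auto
      then show ?thesis
        using i unfolding lower_terminals_def by auto
    qed
  qed
qed

definition with_top_path :: "int \<Rightarrow> grid_edges \<Rightarrow> (int \<Rightarrow> bool) \<Rightarrow> grid_edges" where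
  "with_top_path m h p i j \<longleftrightarrow> h i j \<or> (j = m - 1 \<and> p i)"

definition with_rungs :: "int \<Rightarrow> grid_edges \<Rightarrow> int set \<Rightarrow> grid_edges" where
  "with_rungs m v V i j \<longleftrightarrow> v i j \<or> (j = m - 2 \<and> i \<in> V)"

lemma grid_subgraph_add_row:
  assumes "grid_subgraph n (m - 1) h v" "V \<subseteq> {0..<n}" "\<And>i. p i \<Longrightarrow> 0 \<le> i \<and> i + 1 < n" "m \<ge> 2"
  shows "grid_subgraph n m (with_top_path m h p) (with_rungs m v V)"
  using assms unfolding grid_subgraph_def with_top_path_def with_rungs_def by fastforce

lemma grid_degree_add_row:
  assumes "grid_subgraph n (m - 1) h v"
  shows "j < m - 2 \<Longrightarrow> grid_degree (with_top_path m h p) (with_rungs m v V) (i, j) = grid_degree h v (i, j)"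
    and "grid_degree (with_top_path m h p) (with_rungs m v V) (i, m - 2) = grid_degree h v (i, m - 2) + of_bool (i \<in> V)"
    and "grid_degree (with_top_path m h p) (with_rungs m v V) (i, m - 1) =
           of_bool (p i) + of_bool (p (i - 1)) + of_bool (i \<in> V)"
proof -
  have "\<not> h i (m - 1)" "\<not> v i (m - 2)" "\<not> v i (m - 1)" for i
    using assms unfolding grid_subgraph_def by fastforce+
  then show "j < m - 2 \<Longrightarrow> grid_degree (with_top_path m h p) (with_rungs m v V) (i, j) = grid_degree h v (i, j)"
    and "grid_degree (with_top_path m h p) (with_rungs m v V) (i, m - 2) = grid_degree h v (i, m - 2) + of_bool (i \<in> V)"
    and "grid_degree (with_top_path m h p) (with_rungs m v V) (i, m - 1) =
           of_bool (p i) + of_bool (p (i - 1)) + of_bool (i \<in> V)"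
    unfolding with_top_path_def with_rungs_def grid_degree.simps by auto
qed

lemma add_row_parity:
  assumes join: "connected_T_join n (m - 1) (lower_terminals m T V) S' h v"
    and top: "\<And>i. odd (of_bool (p i) + of_bool (p (i - 1)) + of_bool (i \<in> V) :: nat) \<longleftrightarrow> (i, m - 1) \<in> T"
    and x: "grid_vertex n m x"
  shows "odd (grid_degree (with_top_path m h p) (with_rungs m v V) x) \<longleftrightarrow> x \<in> T"
proof -
  obtain i j where ij: "x = (i, j)" by fastforce
  have sub: "grid_subgraph n (m - 1) h v"
    and old: "\<And>y. grid_vertex n (m - 1) y \<Longrightarrow> odd (grid_degree h v y) \<longleftrightarrow> y \<in> lower_terminals m T V"
    using join unfolding connected_T_join_def by blast+
  consider "j < m - 2" | "j = m - 2" | "j = m - 1"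
    using x unfolding ij grid_vertex_def by fastforce
  then show ?thesis
  proof cases
    case 1
    then have "grid_vertex n (m - 1) x" "x \<in> lower_terminals m T V \<longleftrightarrow> x \<in> T"
      using x unfolding ij grid_vertex_def lower_terminals_def by auto
    then show ?thesis
      using old grid_degree_add_row(1)[OF sub 1] unfolding ij by simp
  next
    case 2
    then have "grid_vertex n (m - 1) x" "x \<in> lower_terminals m T V \<longleftrightarrow> (x \<in> T) \<noteq> (i \<in> V)"
      using x unfolding ij grid_vertex_def lower_terminals_def by auto
    then show ?thesis
      using old grid_degree_add_row(2)[OF sub] unfolding ij 2 by auto
  next
    case 3
    then show ?thesis
      using top[of i] by (simp only: ij 3 grid_degree_add_row(3)[OF sub])
  qed
qed

text \<open>A top-row vertex without a rung is (1, m - 1); it is not a corner, hence a terminal, so a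
  path edge leads to a neighbour with a rung.\<close>

lemma top_row_reaches_rung:
  assumes V: "V \<subseteq> {0..<n}" "{0..<n} - {1} \<subseteq> V"
    and top: "\<And>i. odd (of_bool (p i) + of_bool (p (i - 1)) + of_bool (i \<in> V) :: nat) \<longleftrightarrow> (i, m - 1) \<in> T"
    and x: "(i, m - 1) \<in> T \<union> Collect (grid_corner n m)" "0 \<le> i" "i < n" and "n \<ge> 3"
  obtains k where "k \<in> V" "((i, m - 1), (k, m - 1)) \<in> (grid_adj (with_top_path m h p) v)\<^sup>*"
proof (cases "i \<in> V")
  case False
  then have "i = 1" using V x(2,3) by auto
  then have "(1, m - 1) \<in> T"
    using x(1) \<open>n \<ge> 3\<close> unfolding grid_corner_def by auto
  then have "p 1 \<or> p 0"
    using top[of 1] False \<open>i = 1\<close> by auto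
  moreover have "0 \<in> V" "2 \<in> V"
    using V \<open>n \<ge> 3\<close> by auto
  ultimately show thesis
    using that grid_adj_right[of "with_top_path m h p" 1 "m - 1" v] grid_adj_left[of "with_top_path m h p" 1 "m - 1" v]
    unfolding \<open>i = 1\<close> with_top_path_def by fastforce
qed blast

lemma add_row_connected:
  assumes join: "connected_T_join n (m - 1) T' (lower_connected m S V) h v"
    and V: "V \<subseteq> {0..<n}" "{0..<n} - {1} \<subseteq> V"
    and top: "\<And>i. odd (of_bool (p i) + of_bool (p (i - 1)) + of_bool (i \<in> V) :: nat) \<longleftrightarrow> (i, m - 1) \<in> T"
    and S: "S \<subseteq> T \<union> Collect (grid_corner n m)" and T: "T \<subseteq> Collect (grid_boundary n m)"
    and "n \<ge> 3" "m \<ge> 4"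
  shows "\<forall>x\<in>S. \<forall>y\<in>S. (x, y) \<in> (grid_adj (with_top_path m h p) (with_rungs m v V))\<^sup>*"
proof -
  let ?adj = "grid_adj (with_top_path m h p) (with_rungs m v V)"
  let ?root = "(0, m - 2)"
  have in_lower: "(i, m - 2) \<in> lower_connected m S V" if "i \<in> V" for i
    using that unfolding lower_connected_def by auto
  have "0 \<in> V" "n - 1 \<in> V" using V \<open>n \<ge> 3\<close> by auto
  have to_root: "(y, ?root) \<in> ?adj\<^sup>*" if "y \<in> lower_connected m S V" for y
  proof -
    have "(y, ?root) \<in> (grid_adj h v)\<^sup>*"
      using join that in_lower[OF \<open>0 \<in> V\<close>] unfolding connected_T_join_def by blast
    then show ?thesis
      by (rule grid_reach_mono) (auto simp: with_top_path_def with_rungs_def)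
  qed
  have rung: "((k, m - 1), ?root) \<in> ?adj\<^sup>*" if "k \<in> V" for k
    using grid_adj_down[of "with_rungs m v V" k "m - 1"] to_root[OF in_lower[OF that]] that
    by (simp add: with_rungs_def) (meson converse_rtrancl_into_rtrancl)
  have "(x, ?root) \<in> ?adj\<^sup>*" if xS: "x \<in> S" for x
  proof -
    obtain i j where ij: "x = (i, j)" by fastforce
    have bd: "grid_boundary n m x"
      using xS S T unfolding grid_corner_def grid_boundary_def by auto
    consider "j < m - 2" | "j = m - 2" | "j = m - 1"
      using bd unfolding ij grid_boundary_def grid_vertex_def by fastforce
    then show ?thesis
    proof cases
      case 1
      then show ?thesis using xS to_root unfolding ij lower_connected_def by auto
    next
      case 2
      then have "i \<in> V"
        using bd \<open>m \<ge> 4\<close> \<open>0 \<in> V\<close> \<open>n - 1 \<in> V\<close> unfolding ij grid_boundary_def by auto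
      then show ?thesis using to_root in_lower unfolding ij 2 by blast
    next
      case 3
      have "(i, m - 1) \<in> T \<union> Collect (grid_corner n m)" "0 \<le> i" "i < n"
        using xS S bd unfolding ij 3 grid_boundary_def grid_vertex_def by auto
      then obtain k where "k \<in> V" "((i, m - 1), (k, m - 1)) \<in> ?adj\<^sup>*"
        using top_row_reaches_rung[OF V top] \<open>n \<ge> 3\<close> by blast
      then show ?thesis using rung unfolding ij 3 by (meson rtrancl_trans)
    qed
  qed
  then show ?thesis
    using grid_reach_sym rtrancl_trans by metis
qed

lemma boundary_joinable_add_row:
  assumes joinable: "boundary_joinable n (m - 1)" and "n \<ge> 3" "m \<ge> 4"
  shows "boundary_joinable n m"
  unfolding boundary_joinable_def
proof (intro allI impI)
  fix T S
  assume T: "T \<subseteq> Collect (grid_boundary n m)" "even (card T)"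
    and S: "S \<subseteq> T \<union> Collect (grid_corner n m)"
  have top_row: "{i. (i, m - 1) \<in> T} \<subseteq> {0..<n}"
    using T(1) unfolding grid_boundary_def grid_vertex_def by auto
  obtain V p where V: "V \<subseteq> {0..<n}" "{0..<n} - {1} \<subseteq> V"
    and parity: "even (card V + card {i. (i, m - 1) \<in> T})"
    and p: "\<And>i. p i \<Longrightarrow> 0 \<le> i \<and> i + 1 < n"
      "\<And>i. odd (of_bool (p i) + of_bool (p (i - 1)) + of_bool (i \<in> V) :: nat) \<longleftrightarrow> (i, m - 1) \<in> T"
    using path_with_rungs[OF \<open>n \<ge> 3\<close> top_row] unfolding mem_Collect_eq by blast
  have "finite V" using V(1) finite_subset by blast
  have "T \<subseteq> Collect (grid_vertex n m)" using T(1) unfolding grid_boundary_def by auto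
  have "lower_terminals m T V \<subseteq> Collect (grid_boundary n (m - 1))"
    using lower_terminals_boundary[OF T(1) V(1)] \<open>m \<ge> 4\<close> by simp
  moreover have "even (card (lower_terminals m T V))"
    by (rule even_card_lower_terminals[OF \<open>T \<subseteq> Collect (grid_vertex n m)\<close> T(2) \<open>finite V\<close> parity])
  moreover have "lower_connected m S V \<subseteq> lower_terminals m T V \<union> Collect (grid_corner n (m - 1))"
    using lower_connected_subset[OF S T(1) V \<open>m \<ge> 4\<close>] .
  ultimately have "\<exists>h v. connected_T_join n (m - 1) (lower_terminals m T V) (lower_connected m S V) h v"
    by (rule joinable[unfolded boundary_joinable_def, rule_format])
  then obtain h v
    where join: "connected_T_join n (m - 1) (lower_terminals m T V) (lower_connected m S V) h v"
    by blast
  have sub: "grid_subgraph n (m - 1) h v" using join unfolding connected_T_join_def by blast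
  have "connected_T_join n m T S (with_top_path m h p) (with_rungs m v V)"
    unfolding connected_T_join_def
  proof (intro conjI allI impI)
    show "grid_subgraph n m (with_top_path m h p) (with_rungs m v V)"
      using grid_subgraph_add_row[OF sub V(1) p(1)] \<open>m \<ge> 4\<close> by simp
    show "odd (grid_degree (with_top_path m h p) (with_rungs m v V) x) \<longleftrightarrow> x \<in> T"
      if "grid_vertex n m x" for x
      using add_row_parity[OF join p(2) that] .
  qed (use add_row_connected[OF join V p(2) S T(1) \<open>n \<ge> 3\<close> \<open>m \<ge> 4\<close>] in blast)
  then show "\<exists>h v. connected_T_join n m T S h v" by blast
qed

definition transpose_edges :: "grid_edges \<Rightarrow> grid_edges" where
  "transpose_edges e i j = e j i"

lemma grid_adj_transpose:
  "(prod.swap x, prod.swap y) \<in> grid_adj (transpose_edges v) (transpose_edges h) \<longleftrightarrow> (x, y) \<in> grid_adj h v"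
  unfolding grid_adj_def transpose_edges_def by (cases x; cases y) auto

lemma connected_T_join_transpose:
  assumes "connected_T_join n m T S h v"
  shows "connected_T_join m n (prod.swap ` T) (prod.swap ` S) (transpose_edges v) (transpose_edges h)"
proof -
  have reach: "(prod.swap x, prod.swap y) \<in> (grid_adj (transpose_edges v) (transpose_edges h))\<^sup>*"
    if "(x, y) \<in> (grid_adj h v)\<^sup>*" for x y
    using that
  proof induction
    case (step y z)
    then show ?case
      using grid_adj_transpose[of y z v h] by (meson rtrancl.rtrancl_into_rtrancl)
  qed simp
  have degree: "grid_degree (transpose_edges v) (transpose_edges h) x = grid_degree h v (prod.swap x)" for x
    by (cases x) (simp add: grid_degree.simps transpose_edges_def)
  have vertex: "grid_vertex m n x \<longleftrightarrow> grid_vertex n m (prod.swap x)" for x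
    unfolding grid_vertex_def by auto
  have swap_mem: "x \<in> prod.swap ` A \<longleftrightarrow> prod.swap x \<in> A" for x :: "int \<times> int" and A
    by force
  show ?thesis
    unfolding connected_T_join_def
  proof (intro conjI allI impI ballI)
    show "grid_subgraph m n (transpose_edges v) (transpose_edges h)"
      using assms unfolding connected_T_join_def grid_subgraph_def transpose_edges_def by blast
    show "odd (grid_degree (transpose_edges v) (transpose_edges h) x) \<longleftrightarrow> x \<in> prod.swap ` T"
      if "grid_vertex m n x" for x
      using assms that unfolding connected_T_join_def degree vertex swap_mem by blast
    show "(x, y) \<in> (grid_adj (transpose_edges v) (transpose_edges h))\<^sup>*"
      if "x \<in> prod.swap ` S" "y \<in> prod.swap ` S" for x y
      using that assms reach unfolding connected_T_join_def by auto
  qed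
qed

lemma boundary_joinable_transpose:
  assumes "boundary_joinable n m"
  shows "boundary_joinable m n"
  unfolding boundary_joinable_def
proof (intro allI impI)
  fix T S
  assume T: "T \<subseteq> Collect (grid_boundary m n)" "even (card T)"
    and S: "S \<subseteq> T \<union> Collect (grid_corner m n)"
  have swap_boundary: "grid_boundary n m (prod.swap x) \<longleftrightarrow> grid_boundary m n x"
    and swap_corner: "grid_corner n m (prod.swap x) \<longleftrightarrow> grid_corner m n x" for x
    unfolding grid_boundary_def grid_corner_def grid_vertex_def by auto
  have "prod.swap ` T \<subseteq> Collect (grid_boundary n m)"
    using T(1) swap_boundary by auto
  moreover have "even (card (prod.swap ` T))"
    using T(2) by (simp add: card_image swap_inj_on)
  moreover have "prod.swap ` S \<subseteq> prod.swap ` T \<union> Collect (grid_corner n m)"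
    using S swap_corner by auto
  ultimately have "\<exists>h v. connected_T_join n m (prod.swap ` T) (prod.swap ` S) h v"
    by (rule assms[unfolded boundary_joinable_def, rule_format])
  then obtain h v where "connected_T_join n m (prod.swap ` T) (prod.swap ` S) h v"
    by blast
  then have "connected_T_join m n T S (transpose_edges v) (transpose_edges h)"
    using connected_T_join_transpose[of n m "prod.swap ` T" "prod.swap ` S" h v]
    by (simp add: image_image)
  then show "\<exists>h v. connected_T_join m n T S h v" by blast
qed

lemma boundary_joinable_from_3x3:
  assumes base: "boundary_joinable 3 3" and "n \<ge> 3" "m \<ge> 3"
  shows "boundary_joinable n m"
proof -
  have grow: "boundary_joinable n' m'" if "boundary_joinable n' 3" "n' \<ge> 3" "m' \<ge> 3" for n' m' :: int
    using that(3)
  proof (induction m' rule: int_ge_induct)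
    case (step k)
    then show ?case using boundary_joinable_add_row[of n' "k + 1"] that(2) by simp
  qed (rule that(1))
  have "boundary_joinable n 3"
    using boundary_joinable_transpose grow[OF base _ \<open>n \<ge> 3\<close>] by simp
  then show ?thesis
    using grow \<open>n \<ge> 3\<close> \<open>m \<ge> 3\<close> by blast
qed

section \<open>The 3 x 3 grid\<close>

definition grid3_vertices :: "(int \<times> int) list" where
  "grid3_vertices = [(0, 0), (1, 0), (2, 0), (0, 1), (1, 1), (2, 1), (0, 2), (1, 2), (2, 2)]"

definition grid3_boundary :: "(int \<times> int) list" where
  "grid3_boundary = [(0, 0), (1, 0), (2, 0), (2, 1), (2, 2), (1, 2), (0, 2), (0, 1)]"

definition grid3_corners :: "(int \<times> int) list" where
  "grid3_corners = [(0, 0), (2, 0), (0, 2), (2, 2)]"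

text \<open>A subgraph of the 3 x 3 grid is coded by a string of twelve bits: bit i + 2 j selects
  the horizontal edge at (i, j), bit 6 + i + 3 j the vertical edge at (i, j).\<close>

definition horizontal3 :: "string \<Rightarrow> grid_edges" where
  "horizontal3 w i j \<longleftrightarrow> 0 \<le> i \<and> i < 2 \<and> 0 \<le> j \<and> j < 3 \<and> w ! nat (i + 2 * j) = CHR ''1''"

definition vertical3 :: "string \<Rightarrow> grid_edges" where
  "vertical3 w i j \<longleftrightarrow> 0 \<le> i \<and> i < 3 \<and> 0 \<le> j \<and> j < 2 \<and> w ! nat (6 + i + 3 * j) = CHR ''1''"

definition grid_neighbours :: "grid_edges \<Rightarrow> grid_edges \<Rightarrow> int \<times> int \<Rightarrow> (int \<times> int) list" where
  "grid_neighbours h v x = (case x of (i, j) \<Rightarrow>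
     (if h i j then [(i + 1, j)] else []) @ (if h (i - 1) j then [(i - 1, j)] else []) @
     (if v i j then [(i, j + 1)] else []) @ (if v i (j - 1) then [(i, j - 1)] else []))"

fun grid_explore :: "grid_edges \<Rightarrow> grid_edges \<Rightarrow> nat \<Rightarrow> (int \<times> int) list \<Rightarrow> (int \<times> int) list" where
  "grid_explore h v 0 L = L"
| "grid_explore h v (Suc k) L = grid_explore h v k (remdups (L @ concat (map (grid_neighbours h v) L)))"

lemma grid_neighbours_adj: "y \<in> set (grid_neighbours h v x) \<Longrightarrow> (x, y) \<in> grid_adj h v"
  by (cases x) (auto simp: grid_neighbours_def grid_adj_def split: if_splits)

lemma grid_explore_reach:
  assumes "\<And>y. y \<in> set L \<Longrightarrow> (r, y) \<in> (grid_adj h v)\<^sup>*" "x \<in> set (grid_explore h v k L)"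
  shows "(r, x) \<in> (grid_adj h v)\<^sup>*"
  using assms
proof (induction k arbitrary: L)
  case (Suc k)
  show ?case
  proof (rule Suc.IH[OF _ Suc.prems(2)[simplified]])
    fix y assume "y \<in> set (remdups (L @ concat (map (grid_neighbours h v) L)))"
    then consider "y \<in> set L" | z where "z \<in> set L" "y \<in> set (grid_neighbours h v z)"
      by auto
    then show "(r, y) \<in> (grid_adj h v)\<^sup>*"
    proof cases
      case 2
      then show ?thesis
        using Suc.prems(1) grid_neighbours_adj by (meson rtrancl.rtrancl_into_rtrancl)
    qed (use Suc.prems(1) in blast)
  qed
qed simp

definition join3_ok :: "(int \<times> int) list \<Rightarrow> grid_edges \<Rightarrow> grid_edges \<Rightarrow> bool" where
  "join3_ok T h v \<longleftrightarrow> (\<forall>x\<in>set grid3_vertices. odd (grid_degree h v x) \<longleftrightarrow> x \<in> set T)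
     \<and> (\<forall>x\<in>set (T @ grid3_corners). x \<in> set (grid_explore h v 8 [(0, 0)]))"

definition terminals3 :: "bool list \<Rightarrow> (int \<times> int) list" where
  "terminals3 bs = map fst (filter snd (zip grid3_boundary bs))"

definition even_boundary_sets3 :: "bool list list" where
  "even_boundary_sets3 = filter (\<lambda>bs. even (count_list bs True)) (List.n_lists 8 [True, False])"

text \<open>Found by computer search, one subgraph for each entry of even_boundary_sets3.\<close>

definition grid3_witnesses :: "string list" where
  "grid3_witnesses =
    [''111111010010'', ''101100111111'', ''110011111010'', ''011100111111'', ''110011110010'',
     ''101111011010'', ''111111011010'', ''110111101010'', ''101101101101'', ''001101101101'',
     ''011101101101'', ''111101101101'', ''111111010011'', ''111101100101'', ''111001111101'',
     ''011001111101'', ''111101110110'', ''011101110110'', ''011100101101'', ''111001101110'',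
     ''001101111110'', ''111001100110'', ''111101111110'', ''011101111110'', ''001101111111'',
     ''100111111001'', ''110111111001'', ''111111001001'', ''110111110001'', ''011101110111'',
     ''111011011001'', ''110011101001'', ''111111110110'', ''011111110110'', ''110011011110'',
     ''111011101110'', ''110011010110'', ''111011100110'', ''111111111110'', ''110111001110'',
     ''110011010111'', ''111011100111'', ''111111111111'', ''110111001111'', ''111111110111'',
     ''011111110111'', ''011011101111'', ''111011101111'', ''001110111111'', ''111111100100'',
     ''111011111100'', ''011011111100'', ''111011110100'', ''011011110100'', ''011111101100'',
     ''111111101100'', ''111011110101'', ''011011110101'', ''011111101101'', ''111111101101'',
     ''110111010101'', ''111111100101'', ''111011111101'', ''110011001101'', ''111111110010'',
     ''011111110010'', ''110011011010'', ''111011101010'', ''110011010010'', ''111011100010'',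
     ''111111111010'', ''110111001010'', ''110011010011'', ''100101111101'', ''110101111101'',
     ''111101001101'', ''110101110101'', ''011111110011'', ''111001011101'', ''110001101101'',
     ''111101010110'', ''100100111101'', ''110001111110'', ''111100001101'', ''110001110110'',
     ''101101011110'', ''111101011110'', ''110101101110'', ''101111101001'', ''001111101001'',
     ''011111101001'', ''111111101001'', ''110111010001'', ''111111100001'', ''111011111001'',
     ''110011001001'', ''111111010110'', ''110111100110'', ''110011111110'', ''010011111110'',
     ''110011110110'', ''010011110110'', ''010111101110'', ''110111101110'', ''110011110111'',
     ''010011110111'', ''010111101111'', ''110111101111'', ''111111010111'', ''110111100111'',
     ''110011111111'', ''111011001111'', ''110111110100'', ''000110101111'', ''111011011100'',
     ''110011101100'', ''111011010100'', ''110011100100'', ''110111111100'', ''111111001100'',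
     ''111011010101'', ''110011100101'', ''110111111101'', ''111111001101'', ''110111110101'',
     ''010111110101'', ''010011101101'', ''110011101101'']"

lemma grid3_witnesses_ok:
  "list_all2 (\<lambda>bs w. join3_ok (terminals3 bs) (horizontal3 w) (vertical3 w))
     even_boundary_sets3 grid3_witnesses"
  by code_simp

lemma grid3_enumerations:
  shows "grid_vertex 3 3 x \<longleftrightarrow> x \<in> set grid3_vertices"
    and "grid_boundary 3 3 x \<longleftrightarrow> x \<in> set grid3_boundary"
    and "grid_corner 3 3 x \<longleftrightarrow> x \<in> set grid3_corners"
proof -
  have "grid_vertex 3 3 x \<longleftrightarrow> fst x \<in> {0, 1, 2} \<and> snd x \<in> {0, 1, 2}"
    unfolding grid_vertex_def by auto
  then show vertex: "grid_vertex 3 3 x \<longleftrightarrow> x \<in> set grid3_vertices"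
    by (cases x) (auto simp: grid3_vertices_def)
  show "grid_boundary 3 3 x \<longleftrightarrow> x \<in> set grid3_boundary"
    unfolding grid_boundary_def vertex by (auto simp: grid3_vertices_def grid3_boundary_def)
  show "grid_corner 3 3 x \<longleftrightarrow> x \<in> set grid3_corners"
    unfolding grid_corner_def vertex by (auto simp: grid3_vertices_def grid3_corners_def)
qed

lemma set_terminals3: "set (terminals3 (map P grid3_boundary)) = {x \<in> set grid3_boundary. P x}"
proof -
  have "set (map fst (filter snd (zip xs (map P xs)))) = {x \<in> set xs. P x}" for xs :: "(int \<times> int) list"
    by (induction xs) auto
  then show ?thesis unfolding terminals3_def .
qed

lemma connected_T_join_of_join3_ok:
  assumes ok: "join3_ok Ts (horizontal3 w) (vertical3 w)" and "set Ts = T"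
    and S: "S \<subseteq> T \<union> Collect (grid_corner 3 3)"
  shows "connected_T_join 3 3 T S (horizontal3 w) (vertical3 w)"
  unfolding connected_T_join_def
proof (intro conjI allI impI ballI)
  show "grid_subgraph 3 3 (horizontal3 w) (vertical3 w)"
    unfolding grid_subgraph_def horizontal3_def vertical3_def by auto
  show "odd (grid_degree (horizontal3 w) (vertical3 w) x) \<longleftrightarrow> x \<in> T" if "grid_vertex 3 3 x" for x
    using ok that \<open>set Ts = T\<close> unfolding join3_ok_def grid3_enumerations by blast
  have from_origin: "((0, 0), x) \<in> (grid_adj (horizontal3 w) (vertical3 w))\<^sup>*" if "x \<in> S" for x
  proof (rule grid_explore_reach)
    show "x \<in> set (grid_explore (horizontal3 w) (vertical3 w) 8 [(0, 0)])"
      using ok that S \<open>set Ts = T\<close> unfolding join3_ok_def grid3_enumerations by auto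
  qed simp
  show "(x, y) \<in> (grid_adj (horizontal3 w) (vertical3 w))\<^sup>*" if "x \<in> S" "y \<in> S" for x y
    using from_origin[OF that(1)] from_origin[OF that(2)] grid_reach_sym rtrancl_trans by metis
qed

lemma boundary_joinable_3x3: "boundary_joinable 3 3"
  unfolding boundary_joinable_def
proof (intro allI impI)
  fix T S
  assume T: "T \<subseteq> Collect (grid_boundary 3 3)" "even (card T)"
    and S: "S \<subseteq> T \<union> Collect (grid_corner 3 3)"
  define bs where "bs = map (\<lambda>x. x \<in> T) grid3_boundary"
  have T_eq: "set (terminals3 bs) = T"
    using T(1) unfolding bs_def set_terminals3 grid3_enumerations by auto
  have "count_list bs True = card T"
  proof -
    have "T = set (filter (\<lambda>x. x \<in> T) grid3_boundary)"
      using T(1) unfolding grid3_enumerations by auto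
    moreover have "distinct grid3_boundary" by (simp add: grid3_boundary_def)
    ultimately have "card T = length (filter (\<lambda>x. x \<in> T) grid3_boundary)"
      by (metis distinct_card distinct_filter)
    then show ?thesis
      unfolding bs_def count_list_eq_length_filter by (simp add: filter_map comp_def)
  qed
  moreover have "length bs = 8"
    by (simp add: bs_def grid3_boundary_def)
  ultimately have "bs \<in> set even_boundary_sets3"
    using T(2) unfolding even_boundary_sets3_def by (auto simp: set_n_lists)
  moreover note grid3_witnesses_ok[unfolded list_all2_iff]
  ultimately obtain w where "(bs, w) \<in> set (zip even_boundary_sets3 grid3_witnesses)"
    using in_set_impl_in_set_zip1 by metis
  then have "join3_ok (terminals3 bs) (horizontal3 w) (vertical3 w)"
    using grid3_witnesses_ok[unfolded list_all2_iff] by blast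
  then show "\<exists>h v. connected_T_join 3 3 T S h v"
    using connected_T_join_of_join3_ok[OF _ T_eq S] by (intro exI)
qed

section \<open>Boxes of faces of L2\<close>

definition face_rect :: "int \<Rightarrow> int \<Rightarrow> int \<Rightarrow> int \<Rightarrow> (int \<times> int) set" where
  "face_rect p0 q0 n m = {x. even (fst x - p0) \<and> even (snd x - q0) \<and> p0 \<le> fst x \<and> fst x < p0 + 2 * n
      \<and> q0 \<le> snd x \<and> snd x < q0 + 2 * m}"

lemma fst_face_rect: "m \<ge> 1 \<Longrightarrow> fst ` face_rect p0 q0 n m = {p. even (p - p0) \<and> p0 \<le> p \<and> p < p0 + 2 * n}"
proof (rule set_eqI, rule iffI)
  fix p assume "p \<in> fst ` face_rect p0 q0 n m" then show "p \<in> {p. even (p - p0) \<and> p0 \<le> p \<and> p < p0 + 2 * n}"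
    unfolding face_rect_def by auto
next
  fix p assume "m \<ge> 1" "p \<in> {p. even (p - p0) \<and> p0 \<le> p \<and> p < p0 + 2 * n}"
  then show "p \<in> fst ` face_rect p0 q0 n m" by (intro image_eqI[of _ _ "(p, q0)"]) (auto simp: face_rect_def)
qed

lemma snd_face_rect: "n \<ge> 1 \<Longrightarrow> snd ` face_rect p0 q0 n m = {q. even (q - q0) \<and> q0 \<le> q \<and> q < q0 + 2 * m}"
proof (rule set_eqI, rule iffI)
  fix q assume "q \<in> snd ` face_rect p0 q0 n m" then show "q \<in> {q. even (q - q0) \<and> q0 \<le> q \<and> q < q0 + 2 * m}"
    unfolding face_rect_def by auto
next
  fix q assume "n \<ge> 1" "q \<in> {q. even (q - q0) \<and> q0 \<le> q \<and> q < q0 + 2 * m}"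
  then show "q \<in> snd ` face_rect p0 q0 n m" by (intro image_eqI[of _ _ "(p0, q)"]) (auto simp: face_rect_def)
qed

lemma finite_even_progression: "finite {p. even (p - p0) \<and> p0 \<le> p \<and> p < p0 + 2 * (n::int)}"
  by (rule finite_subset[of _ "{p0..<p0+2 * n}"]) auto

lemma Max_even_progression: "(n::int) \<ge> 1 \<Longrightarrow> Max {p. even (p - p0) \<and> p0 \<le> p \<and> p < p0 + 2 * n} = p0 + 2 * (n - 1)"
  by (rule Max_eqI[OF finite_even_progression]; simp; presburger)

lemma Min_even_progression: "(n::int) \<ge> 1 \<Longrightarrow> Min {p. even (p - p0) \<and> p0 \<le> p \<and> p < p0 + 2 * n} = p0"
  by (rule Min_eqI[OF finite_even_progression]) auto

lemma add_right_face_rect: "n \<ge> 1 \<Longrightarrow> m \<ge> 1 \<Longrightarrow> add_right (face_rect p0 q0 n m) = face_rect p0 q0 (n + 1) m"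
  unfolding add_right_def fst_face_rect Max_even_progression
  by (auto simp: face_rect_def; presburger)

lemma add_left_face_rect: "n \<ge> 1 \<Longrightarrow> m \<ge> 1 \<Longrightarrow> add_left (face_rect p0 q0 n m) = face_rect (p0 - 2) q0 (n + 1) m"
  unfolding add_left_def fst_face_rect Min_even_progression
  by (auto simp: face_rect_def; presburger)

lemma add_top_face_rect: "n \<ge> 1 \<Longrightarrow> m \<ge> 1 \<Longrightarrow> add_top (face_rect p0 q0 n m) = face_rect p0 q0 n (m + 1)"
  unfolding add_top_def snd_face_rect Max_even_progression
  by (auto simp: face_rect_def; presburger)

lemma add_bottom_face_rect: "n \<ge> 1 \<Longrightarrow> m \<ge> 1 \<Longrightarrow> add_bottom (face_rect p0 q0 n m) = face_rect p0 (q0 - 2) n (m + 1)"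
  unfolding add_bottom_def snd_face_rect Min_even_progression
  by (auto simp: face_rect_def; presburger)

lemma box_first_column: "\<exists>q0. odd q0 \<and> box (Suc m) (Suc 0) = face_rect (-1) q0 1 (int m + 1)"
proof (induction m)
  case 0
  have "box (Suc 0) (Suc 0) = face_rect (-1) (-1) 1 1"
    by (auto simp: face_rect_def prod_eq_iff; presburger)
  then show ?case by (intro exI[of _ "-1"]) simp
next
  case (Suc m)
  then obtain q0 where q: "odd q0" "box (Suc m) (Suc 0) = face_rect (-1) q0 1 (int m + 1)" by blast
  show ?case
  proof (cases "odd (Suc m)")
    case True
    then have "box (Suc (Suc m)) (Suc 0) = face_rect (-1) (q0 - 2) 1 (int m + 1 + 1)"
      using q add_bottom_face_rect[of 1 "int m + 1" "-1" q0] by simp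
    then show ?thesis using q by (intro exI[of _ "q0 - 2"]) simp
  next
    case False
    then have "box (Suc (Suc m)) (Suc 0) = face_rect (-1) q0 1 (int m + 1 + 1)"
      using q add_top_face_rect[of 1 "int m + 1" "-1" q0] by simp
    then show ?thesis using q by (intro exI[of _ q0]) simp
  qed
qed

lemma box_eq_face_rect: "\<exists>p0 q0. odd p0 \<and> odd q0 \<and> box (Suc m) (Suc n) = face_rect p0 q0 (int n + 1) (int m + 1)"
proof (induction n)
  case 0
  obtain q0 where "odd q0" "box (Suc m) (Suc 0) = face_rect (-1) q0 1 (int m + 1)" using box_first_column[of m] by blast
  then show ?case by (intro exI[of _ "-1"] exI[of _ q0]) simp
next
  case (Suc n)
  then obtain p0 q0 where q: "odd p0" "odd q0" "box (Suc m) (Suc n) = face_rect p0 q0 (int n + 1) (int m + 1)" by blast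
  show ?case
  proof (cases "odd (Suc n)")
    case True
    then have "box (Suc m) (Suc (Suc n)) = face_rect p0 q0 (int n + 1 + 1) (int m + 1)"
      using q add_right_face_rect[of "int n + 1" "int m + 1" p0 q0] by simp
    then show ?thesis using q by (intro exI[of _ p0] exI[of _ q0]) simp
  next
    case False
    then have "box (Suc m) (Suc (Suc n)) = face_rect (p0 - 2) q0 (int n + 1 + 1) (int m + 1)"
      using q add_left_face_rect[of "int n + 1" "int m + 1" p0 q0] by simp
    then show ?thesis using q by (intro exI[of _ "p0 - 2"] exI[of _ q0]) simp
  qed
qed

definition grid_embed :: "int \<Rightarrow> int \<Rightarrow> int \<times> int \<Rightarrow> int \<times> int" where
  "grid_embed a c g = (a + 2 * fst g, c + 2 * snd g)"

lemma inside_box_eq_grid_embed: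
  assumes "M \<ge> 1" "N \<ge> 1"
  shows "\<exists>a c. even a \<and> even c \<and> (\<forall>v. inside_box M N v \<longleftrightarrow> (\<exists>g. grid_vertex (int N) (int M) g \<and> v = grid_embed a c g))"
proof -
  obtain m n where mn: "M = Suc m" "N = Suc n" using assms by (metis Suc_le_D One_nat_def)
  obtain p0 q0 where q': "odd p0" "odd q0" "box (Suc m) (Suc n) = face_rect p0 q0 (int n + 1) (int m + 1)"
    using box_eq_face_rect[of m n] by blast
  then have q: "odd p0" "odd q0" "box M N = face_rect p0 q0 (int N) (int M)" using mn by (simp_all add: add.commute)
  have "inside_box M N v \<longleftrightarrow> (\<exists>g. grid_vertex (int N) (int M) g \<and> v = grid_embed (p0 + 1) (q0 + 1) g)" for v
  proof
    assume "inside_box M N v"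
    then obtain p q where pq: "(p, q) \<in> face_rect p0 q0 (int N) (int M)" "p < fst v" "fst v < p + 2"
      "q < snd v" "snd v < q + 2" "even (fst v)" "even (snd v)"
      unfolding inside_box_def q L1_vertex_def by auto
    then have "fst v = p + 1" "snd v = q + 1" by (auto simp: face_rect_def; presburger)+
    then show "\<exists>g. grid_vertex (int N) (int M) g \<and> v = grid_embed (p0 + 1) (q0 + 1) g"
      using pq(1) unfolding face_rect_def grid_vertex_def grid_embed_def
      by (intro exI[of _ "((p - p0) div 2, (q - q0) div 2)"]) (auto simp: prod_eq_iff elim!: evenE)
  next
    assume "\<exists>g. grid_vertex (int N) (int M) g \<and> v = grid_embed (p0 + 1) (q0 + 1) g"
    then obtain g where g: "grid_vertex (int N) (int M) g" "v = grid_embed (p0 + 1) (q0 + 1) g" by blast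
    have "(p0 + 2 * fst g, q0 + 2 * snd g) \<in> box M N" using g unfolding q face_rect_def grid_vertex_def by auto
    moreover have "L1_vertex v" using g q unfolding L1_vertex_def grid_embed_def by auto
    ultimately show "inside_box M N v" unfolding inside_box_def using g unfolding grid_embed_def
      by (auto intro!: bexI[of _ "(p0 + 2 * fst g, q0 + 2 * snd g)"])
  qed
  then show ?thesis using q by (intro exI[of _ "p0 + 1"] exI[of _ "q0 + 1"]) auto
qed

section \<open>The grid inside the box\<close>

fun grid_nbhd :: "int \<times> int \<Rightarrow> (int \<times> int) set" where
  "grid_nbhd (i, j) = {(i + 1, j), (i - 1, j), (i, j + 1), (i, j - 1)}"

lemma even_squares_sum_eq_4:
  fixes x y :: int
  assumes "x\<^sup>2 + y\<^sup>2 = 4" "even x" "even y"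
  shows "(x, y) \<in> {(2, 0), (-2, 0), (0, 2), (0, -2)}"
proof -
  obtain x' y' where xy: "x = 2 * x'" "y = 2 * y'"
    using assms(2,3) by (auto elim!: evenE)
  then have unit: "x'\<^sup>2 + y'\<^sup>2 = 1"
    using assms(1) by (simp add: power_mult_distrib)
  then have "x'\<^sup>2 \<le> 1" "y'\<^sup>2 \<le> 1"
    by (smt (verit) zero_le_power2)+
  then have "\<bar>x'\<bar> \<le> 1" "\<bar>y'\<bar> \<le> 1"
    using abs_square_le_1 by blast+
  then have "x' \<in> {-1, 0, 1}" "y' \<in> {-1, 0, 1}" by auto
  then show ?thesis using unit xy by auto
qed

lemma L1_edge_other_end:
  assumes "L1_edge e" "p \<in> e"
  obtains z where "e = {p, z}" "L1_vertex p" "L1_vertex z" "(fst z - fst p)\<^sup>2 + (snd z - snd p)\<^sup>2 = 4"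
proof -
  obtain u w where uw: "e = {u, w}" "L1_vertex u" "L1_vertex w" "(fst u - fst w)\<^sup>2 + (snd u - snd w)\<^sup>2 = 4"
    using assms(1) unfolding L1_edge_def by blast
  have "(fst w - fst u)\<^sup>2 + (snd w - snd u)\<^sup>2 = 4"
    using uw(4) by (simp add: power2_commute)
  show thesis
  proof (cases "p = u")
    case True
    then show thesis using that[of w] uw \<open>(fst w - fst u)\<^sup>2 + _ = 4\<close> by simp
  next
    case False
    then have "p = w" using uw(1) assms(2) by blast
    then show thesis using that[of u] uw by (simp add: insert_commute)
  qed
qed

lemma grid_embed_eq_iff [simp]: "grid_embed a c g = grid_embed a c h \<longleftrightarrow> g = h"
  unfolding grid_embed_def by (auto simp: prod_eq_iff)

lemma L1_edge_at_grid_embed: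
  assumes "even a" "even c" "L1_edge e" "grid_embed a c g \<in> e"
  obtains h where "h \<in> grid_nbhd g" "e = {grid_embed a c g, grid_embed a c h}"
proof -
  let ?p = "grid_embed a c g"
  obtain z where z: "e = {?p, z}" "L1_vertex ?p" "L1_vertex z" "(fst z - fst ?p)\<^sup>2 + (snd z - snd ?p)\<^sup>2 = 4"
    using L1_edge_other_end[OF assms(3,4)] by blast
  then have "even (fst z - fst ?p)" "even (snd z - snd ?p)"
    unfolding L1_vertex_def by auto
  with z(4) have "(fst z - fst ?p, snd z - snd ?p) \<in> {(2, 0), (-2, 0), (0, 2), (0, -2)}"
    by (rule even_squares_sum_eq_4)
  then have "z \<in> grid_embed a c ` grid_nbhd g"
    by (cases g; cases z) (auto simp: grid_embed_def)
  with z(1) that show thesis by blast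
qed

lemma L1_edge_grid_embed:
  assumes "even a" "even c" "h \<in> grid_nbhd g"
  shows "L1_edge {grid_embed a c g, grid_embed a c h}"
proof -
  have "L1_vertex (grid_embed a c x)" for x
    using assms(1,2) by (simp add: L1_vertex_def grid_embed_def)
  moreover have "(fst (grid_embed a c g) - fst (grid_embed a c h))\<^sup>2
      + (snd (grid_embed a c g) - snd (grid_embed a c h))\<^sup>2 = 4"
    using assms(3) by (cases g) (auto simp: grid_embed_def power2_eq_square)
  ultimately show ?thesis
    unfolding L1_edge_def by blast
qed

lemma grid_adj_nbhd: "(x, y) \<in> grid_adj h v \<Longrightarrow> y \<in> grid_nbhd x"
  unfolding grid_adj_def by auto

lemma grid_adj_vertices:
  assumes "grid_subgraph n m h v" "(x, y) \<in> grid_adj h v"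
  shows "grid_vertex n m x" "grid_vertex n m y"
  using assms unfolding grid_subgraph_def grid_adj_def grid_vertex_def by fastforce+

lemma card_grid_adj: "card {y. (x, y) \<in> grid_adj h v} = grid_degree h v x"
proof (cases x)
  case (Pair i j)
  have "{y. (x, y) \<in> grid_adj h v} = (if h i j then {(i + 1, j)} else {}) \<union> (if h (i - 1) j then {(i - 1, j)} else {})
      \<union> (if v i j then {(i, j + 1)} else {}) \<union> (if v i (j - 1) then {(i, j - 1)} else {})"
    unfolding Pair grid_adj_def by auto
  then show ?thesis
    unfolding Pair grid_degree.simps by (simp add: card_insert_if)
qed

lemma finite_grid_nbhd: "finite (grid_nbhd g)"
  by (cases g) simp

lemma finite_outer_neighbours: "finite {h \<in> grid_nbhd g. \<not> grid_vertex n m h}"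
  using finite_grid_nbhd by simp

lemma outer_neighbour_boundary:
  assumes "grid_vertex n m g" "h \<in> grid_nbhd g" "\<not> grid_vertex n m h"
  shows "grid_boundary n m g"
  using assms unfolding grid_boundary_def grid_vertex_def by (cases g) auto

lemma card_outer_neighbours_le_1:
  assumes "n \<ge> 2" "m \<ge> 2" "grid_vertex n m g" "\<not> grid_corner n m g"
  shows "card {h \<in> grid_nbhd g. \<not> grid_vertex n m h} \<le> 1"
proof -
  obtain i j where g: "g = (i, j)" by fastforce
  have "\<exists>h0. {h \<in> grid_nbhd g. \<not> grid_vertex n m h} \<subseteq> {h0}"
  proof (cases "i = 0 \<or> i = n - 1")
    case True
    then show ?thesis
      using assms unfolding g grid_corner_def grid_vertex_def
      by (intro exI[of _ "if i = 0 then (i - 1, j) else (i + 1, j)"]) auto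
  next
    case False
    then show ?thesis
      using assms unfolding g grid_corner_def grid_vertex_def
      by (intro exI[of _ "if j = 0 then (i, j - 1) else (i, j + 1)"]) auto
  qed
  then show ?thesis
    by (metis card.empty card_mono finite.emptyI finite.insertI is_singletonI is_singleton_altdef)
qed

definition lift_edges :: "int \<Rightarrow> int \<Rightarrow> grid_edges \<Rightarrow> grid_edges \<Rightarrow> (int \<times> int) set set" where
  "lift_edges a c h v = {{grid_embed a c x, grid_embed a c y} | x y. (x, y) \<in> grid_adj h v}"

lemma incident_lift_edges:
  "{e \<in> lift_edges a c h v. grid_embed a c x \<in> e} =
     (\<lambda>y. {grid_embed a c x, grid_embed a c y}) ` {y. (x, y) \<in> grid_adj h v}"
proof (intro set_eqI iffI)
  fix e assume "e \<in> {e \<in> lift_edges a c h v. grid_embed a c x \<in> e}"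
  then obtain x' y' where e: "e = {grid_embed a c x', grid_embed a c y'}" "(x', y') \<in> grid_adj h v"
    and "x = x' \<or> x = y'"
    unfolding lift_edges_def by auto
  moreover have "(y', x') \<in> grid_adj h v"
    using symD[OF sym_grid_adj e(2)] .
  ultimately show "e \<in> (\<lambda>y. {grid_embed a c x, grid_embed a c y}) ` {y. (x, y) \<in> grid_adj h v}"
    by (auto simp: insert_commute intro: image_eqI[of _ _ x'])
next
  fix e assume "e \<in> (\<lambda>y. {grid_embed a c x, grid_embed a c y}) ` {y. (x, y) \<in> grid_adj h v}"
  then obtain y where "e = {grid_embed a c x, grid_embed a c y}" "(x, y) \<in> grid_adj h v"
    by blast
  then show "e \<in> {e \<in> lift_edges a c h v. grid_embed a c x \<in> e}"
    unfolding lift_edges_def by blast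
qed

lemma card_incident_lift_edges:
  "card {e \<in> lift_edges a c h v. grid_embed a c x \<in> e} = grid_degree h v x"
proof -
  have "x \<notin> grid_nbhd x" by (cases x) auto
  then have "inj_on (\<lambda>y. {grid_embed a c x, grid_embed a c y}) {y. (x, y) \<in> grid_adj h v}"
    by (auto intro!: inj_onI dest!: grid_adj_nbhd simp: doubleton_eq_iff)
  then show ?thesis
    unfolding incident_lift_edges by (simp add: card_image card_grid_adj)
qed

lemma lift_edges_walk:
  assumes "(x, y) \<in> (grid_adj h v)\<^sup>*" "lift_edges a c h v \<subseteq> Q" "e \<in> Q" "grid_embed a c x \<in> e"
  shows "\<exists>e'\<in>Q. grid_embed a c y \<in> e' \<and> (e, e') \<in> {(f, f'). f \<in> Q \<and> f' \<in> Q \<and> f \<inter> f' \<noteq> {}}\<^sup>*"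
  using assms(1)
proof induction
  case (step y z)
  then obtain e' where e': "e' \<in> Q" "grid_embed a c y \<in> e'"
    "(e, e') \<in> {(f, f'). f \<in> Q \<and> f' \<in> Q \<and> f \<inter> f' \<noteq> {}}\<^sup>*"
    by blast
  have "{grid_embed a c y, grid_embed a c z} \<in> Q"
    using step(2) assms(2) unfolding lift_edges_def by blast
  with e' show ?case
    by (intro bexI[of _ "{grid_embed a c y, grid_embed a c z}"]) (auto intro: rtrancl_into_rtrancl)
qed (use assms(3,4) in blast)

locale grid_in_box =
  fixes M N :: nat and a c :: int
  assumes even_a: "even a" and even_c: "even c"
    and inside_box_iff: "\<And>v. inside_box M N v \<longleftrightarrow> (\<exists>g. grid_vertex (int N) (int M) g \<and> v = grid_embed a c g)"
begin

lemma inside_box_grid_embed: "inside_box M N (grid_embed a c g) \<longleftrightarrow> grid_vertex (int N) (int M) g"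
  by (metis grid_embed_eq_iff inside_box_iff)

definition crossings_at :: "(int \<times> int) set set \<Rightarrow> int \<times> int \<Rightarrow> (int \<times> int) set set" where
  "crossings_at P g = {e \<in> P. crossing_edge M N e \<and> grid_embed a c g \<in> e}"

lemma crossings_at_subset:
  assumes "\<forall>e\<in>P. L1_edge e" "grid_vertex (int N) (int M) g"
  shows "crossings_at P g \<subseteq>
    (\<lambda>h. {grid_embed a c g, grid_embed a c h}) ` {h \<in> grid_nbhd g. \<not> grid_vertex (int N) (int M) h}"
proof
  fix e assume e: "e \<in> crossings_at P g"
  then have "L1_edge e" "grid_embed a c g \<in> e"
    using assms(1) unfolding crossings_at_def by auto
  then obtain h where h: "h \<in> grid_nbhd g" "e = {grid_embed a c g, grid_embed a c h}"
    by (rule L1_edge_at_grid_embed[OF even_a even_c])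
  have "\<exists>w\<in>e. \<not> inside_box M N w"
    using e unfolding crossings_at_def crossing_edge_def by blast
  then have "\<not> grid_vertex (int N) (int M) h"
    using h(2) assms(2) inside_box_grid_embed by auto
  with h show "e \<in> (\<lambda>h. {grid_embed a c g, grid_embed a c h}) ` {h \<in> grid_nbhd g. \<not> grid_vertex (int N) (int M) h}"
    by blast
qed

lemma finite_crossings_at:
  assumes "\<forall>e\<in>P. L1_edge e" "grid_vertex (int N) (int M) g"
  shows "finite (crossings_at P g)"
  using crossings_at_subset[OF assms] finite_imageI[OF finite_outer_neighbours] by (rule finite_subset)

lemma card_crossings_at_le:
  assumes "\<forall>e\<in>P. L1_edge e" "grid_vertex (int N) (int M) g"
  shows "card (crossings_at P g) \<le> card {h \<in> grid_nbhd g. \<not> grid_vertex (int N) (int M) h}"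
  using card_mono[OF finite_imageI[OF finite_outer_neighbours] crossings_at_subset[OF assms]]
    card_image_le[OF finite_outer_neighbours] by (rule le_trans)

definition crossing_terminals :: "(int \<times> int) set set \<Rightarrow> (int \<times> int) set" where
  "crossing_terminals P = {g. grid_vertex (int N) (int M) g \<and> odd (card (crossings_at P g))}"

definition crossing_vertices :: "(int \<times> int) set set \<Rightarrow> (int \<times> int) set" where
  "crossing_vertices P = {g. grid_vertex (int N) (int M) g \<and> crossings_at P g \<noteq> {}}"

lemma crossing_terminals_boundary:
  assumes "\<forall>e\<in>P. L1_edge e"
  shows "crossing_terminals P \<subseteq> Collect (grid_boundary (int N) (int M))"
proof
  fix g assume "g \<in> crossing_terminals P"
  then have g: "grid_vertex (int N) (int M) g" "crossings_at P g \<noteq> {}"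
    unfolding crossing_terminals_def by auto
  then obtain h where "h \<in> grid_nbhd g" "\<not> grid_vertex (int N) (int M) h"
    using crossings_at_subset[OF assms g(1)] by blast
  then show "g \<in> Collect (grid_boundary (int N) (int M))"
    using outer_neighbour_boundary g(1) by blast
qed

lemma crossing_vertices_subset:
  assumes "\<forall>e\<in>P. L1_edge e" "N \<ge> 2" "M \<ge> 2"
  shows "crossing_vertices P \<subseteq> crossing_terminals P \<union> Collect (grid_corner (int N) (int M))"
proof
  fix g assume "g \<in> crossing_vertices P"
  then have g: "grid_vertex (int N) (int M) g" "crossings_at P g \<noteq> {}"
    unfolding crossing_vertices_def by auto
  show "g \<in> crossing_terminals P \<union> Collect (grid_corner (int N) (int M))"
  proof (cases "grid_corner (int N) (int M) g")
    case False
    then have "card (crossings_at P g) \<le> 1"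
      using card_crossings_at_le[OF assms(1) g(1)] card_outer_neighbours_le_1[OF _ _ g(1)] assms(2,3)
      by fastforce
    moreover have "card (crossings_at P g) \<noteq> 0"
      using g(2) finite_crossings_at[OF assms(1) g(1)] by simp
    ultimately have "card (crossings_at P g) = 1" by linarith
    then show ?thesis
      using g(1) unfolding crossing_terminals_def by simp
  qed simp
qed

lemma card_crossing_edges:
  assumes "\<forall>e\<in>P. L1_edge e"
  shows "card {e \<in> P. crossing_edge M N e} = (\<Sum>g\<in>Collect (grid_vertex (int N) (int M)). card (crossings_at P g))"
proof -
  have "{e \<in> P. crossing_edge M N e} = (\<Union>g\<in>Collect (grid_vertex (int N) (int M)). crossings_at P g)"
  proof (intro equalityI subsetI)
    fix e assume e: "e \<in> {e \<in> P. crossing_edge M N e}"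
    then obtain u where u: "u \<in> e" "inside_box M N u"
      unfolding crossing_edge_def by blast
    then obtain g where "grid_vertex (int N) (int M) g" "u = grid_embed a c g"
      using inside_box_iff[of u] by blast
    with u(1) have "grid_vertex (int N) (int M) g" "grid_embed a c g \<in> e"
      by auto
    with e show "e \<in> (\<Union>g\<in>Collect (grid_vertex (int N) (int M)). crossings_at P g)"
      unfolding crossings_at_def by blast
  next
    fix e assume "e \<in> (\<Union>g\<in>Collect (grid_vertex (int N) (int M)). crossings_at P g)"
    then show "e \<in> {e \<in> P. crossing_edge M N e}"
      unfolding crossings_at_def by blast
  qed
  moreover have "crossings_at P g \<inter> crossings_at P g' = {}"
    if gg: "grid_vertex (int N) (int M) g" "grid_vertex (int N) (int M) g'" "g \<noteq> g'" for g g'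
  proof (rule ccontr)
    assume "crossings_at P g \<inter> crossings_at P g' \<noteq> {}"
    then obtain e where "e \<in> crossings_at P g" "grid_embed a c g' \<in> e"
      unfolding crossings_at_def by blast
    then obtain h where "\<not> grid_vertex (int N) (int M) h" "grid_embed a c g' \<in> {grid_embed a c g, grid_embed a c h}"
      using crossings_at_subset[OF assms gg(1)] by blast
    then show False
      using gg(2,3) by auto
  qed
  ultimately show ?thesis
    using finite_crossings_at[OF assms] finite_grid_vertices by (simp add: card_UN_disjoint)
qed

lemma even_card_crossing_terminals:
  assumes "\<forall>e\<in>P. L1_edge e" "even (card {e \<in> P. crossing_edge M N e})"
  shows "even (card (crossing_terminals P))"
proof -
  have "crossing_terminals P = {g \<in> Collect (grid_vertex (int N) (int M)). odd (card (crossings_at P g))}"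
    unfolding crossing_terminals_def by simp
  then show ?thesis
    using assms(2) even_sum_iff[OF finite_grid_vertices, of "\<lambda>g. card (crossings_at P g)"]
    unfolding card_crossing_edges[OF assms(1)] by simp
qed

end

context grid_in_box
begin

definition rewire :: "(int \<times> int) set set \<Rightarrow> grid_edges \<Rightarrow> grid_edges \<Rightarrow> (int \<times> int) set set" where
  "rewire P h v = {e \<in> P. \<not> box_edge M N e} \<union> lift_edges a c h v"

lemma lift_edges_box_edge:
  assumes "grid_subgraph (int N) (int M) h v" "e \<in> lift_edges a c h v"
  shows "box_edge M N e"
proof -
  obtain x y where xy: "e = {grid_embed a c x, grid_embed a c y}" "(x, y) \<in> grid_adj h v"
    using assms(2) unfolding lift_edges_def by blast
  then have "L1_edge e"
    using L1_edge_grid_embed[OF even_a even_c grid_adj_nbhd] by blast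
  with xy show ?thesis
    using grid_adj_vertices[OF assms(1) xy(2)] unfolding box_edge_def by (auto simp: inside_box_grid_embed)
qed

lemma box_edge_not_crossing: "box_edge M N e \<Longrightarrow> \<not> crossing_edge M N e"
  unfolding box_edge_def crossing_edge_def by blast

lemma incident_non_box_edges:
  assumes "\<forall>e\<in>P. L1_edge e" "grid_vertex (int N) (int M) g"
  shows "{e \<in> P. \<not> box_edge M N e \<and> grid_embed a c g \<in> e} = crossings_at P g"
proof (intro equalityI subsetI)
  fix e assume e: "e \<in> {e \<in> P. \<not> box_edge M N e \<and> grid_embed a c g \<in> e}"
  have "inside_box M N (grid_embed a c g)"
    using assms(2) inside_box_grid_embed by simp
  with e assms(1) have "crossing_edge M N e"
    unfolding crossing_edge_def box_edge_def by blast
  with e show "e \<in> crossings_at P g"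
    unfolding crossings_at_def by blast
qed (use box_edge_not_crossing in \<open>auto simp: crossings_at_def\<close>)

lemma deg_rewire:
  assumes "\<forall>e\<in>P. L1_edge e" "grid_subgraph (int N) (int M) h v" "grid_vertex (int N) (int M) g"
  shows "deg (rewire P h v) (grid_embed a c g) = card (crossings_at P g) + grid_degree h v g"
proof -
  let ?lifted = "{e \<in> lift_edges a c h v. grid_embed a c g \<in> e}"
  have "{e \<in> rewire P h v. grid_embed a c g \<in> e} = crossings_at P g \<union> ?lifted"
    using incident_non_box_edges[OF assms(1,3)] unfolding rewire_def by blast
  moreover have "crossings_at P g \<inter> ?lifted = {}"
    using lift_edges_box_edge[OF assms(2)] box_edge_not_crossing unfolding crossings_at_def by blast
  moreover have "finite ?lifted"
    unfolding incident_lift_edges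
    by (rule finite_imageI, rule finite_subset[OF _ finite_grid_nbhd]) (auto dest: grid_adj_nbhd)
  ultimately show ?thesis
    unfolding deg_def using finite_crossings_at[OF assms(1,3)]
    by (simp add: card_Un_disjoint card_incident_lift_edges)
qed

lemma crossing_edge_rewire:
  assumes "grid_subgraph (int N) (int M) h v" "e \<in> rewire P h v" "crossing_edge M N e"
  obtains g where "g \<in> crossing_vertices P" "grid_embed a c g \<in> e"
proof -
  have "e \<in> P"
    using assms lift_edges_box_edge box_edge_not_crossing unfolding rewire_def by blast
  obtain u where u: "u \<in> e" "inside_box M N u"
    using assms(3) unfolding crossing_edge_def by blast
  then obtain g where g: "grid_vertex (int N) (int M) g" "u = grid_embed a c g"
    using inside_box_iff[of u] by blast
  then have "e \<in> crossings_at P g"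
    using \<open>e \<in> P\<close> assms(3) u(1) unfolding crossings_at_def by blast
  with g u(1) that show thesis
    unfolding crossing_vertices_def by blast
qed

lemma same_contour_rewire:
  assumes "grid_subgraph (int N) (int M) h v"
    and connected: "\<forall>x\<in>crossing_vertices P. \<forall>y\<in>crossing_vertices P. (x, y) \<in> (grid_adj h v)\<^sup>*"
    and e: "e \<in> rewire P h v" "crossing_edge M N e" and f: "f \<in> rewire P h v" "crossing_edge M N f"
  shows "same_contour (rewire P h v) e f"
proof -
  let ?adj = "{(e, e'). e \<in> rewire P h v \<and> e' \<in> rewire P h v \<and> e \<inter> e' \<noteq> {}}"
  obtain g where g: "g \<in> crossing_vertices P" "grid_embed a c g \<in> e"
    using crossing_edge_rewire[OF assms(1) e] by blast
  obtain g' where g': "g' \<in> crossing_vertices P" "grid_embed a c g' \<in> f"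
    using crossing_edge_rewire[OF assms(1) f] by blast
  have "lift_edges a c h v \<subseteq> rewire P h v"
    unfolding rewire_def by blast
  then obtain e' where e': "e' \<in> rewire P h v" "grid_embed a c g' \<in> e'" "(e, e') \<in> ?adj\<^sup>*"
    using lift_edges_walk[OF connected[rule_format, OF g(1) g'(1)] _ e(1) g(2)] by blast
  have "(e', f) \<in> ?adj"
    using e' g' f(1) by blast
  with e'(3) have "(e, f) \<in> ?adj\<^sup>*"
    by (rule rtrancl_into_rtrancl)
  with e(1) f(1) show ?thesis
    unfolding same_contour_def by blast
qed

theorem rewiring_exists:
  assumes "M \<ge> 3" "N \<ge> 3" "primal_contour_config P" "even (card {e \<in> P. crossing_edge M N e})"
  shows "\<exists>P'. (\<forall>e\<in>P'. L1_edge e)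
     \<and> (\<forall>e. \<not> box_edge M N e \<longrightarrow> (e \<in> P' \<longleftrightarrow> e \<in> P))
     \<and> (\<forall>e f. e \<in> P' \<and> crossing_edge M N e \<and> f \<in> P' \<and> crossing_edge M N f
              \<longrightarrow> same_contour P' e f)
     \<and> (\<forall>v. inside_box M N v \<longrightarrow> even (deg P' v))"
proof -
  have L1: "\<forall>e\<in>P. L1_edge e"
    using assms(3) unfolding primal_contour_config_def by blast
  have "boundary_joinable (int N) (int M)"
    using boundary_joinable_from_3x3[OF boundary_joinable_3x3] assms(1,2) by simp
  moreover have "crossing_vertices P \<subseteq> crossing_terminals P \<union> Collect (grid_corner (int N) (int M))"
    using crossing_vertices_subset[OF L1] assms(1,2) by simp
  ultimately have "\<exists>h v. connected_T_join (int N) (int M) (crossing_terminals P) (crossing_vertices P) h v"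
    unfolding boundary_joinable_def
    using crossing_terminals_boundary[OF L1] even_card_crossing_terminals[OF L1 assms(4)] by presburger
  then obtain h v where sub: "grid_subgraph (int N) (int M) h v"
    and parity: "\<And>g. grid_vertex (int N) (int M) g \<Longrightarrow> odd (grid_degree h v g) \<longleftrightarrow> g \<in> crossing_terminals P"
    and connected: "\<forall>x\<in>crossing_vertices P. \<forall>y\<in>crossing_vertices P. (x, y) \<in> (grid_adj h v)\<^sup>*"
    unfolding connected_T_join_def by blast
  have "even (deg (rewire P h v) u)" if u: "inside_box M N u" for u
  proof -
    obtain g where "grid_vertex (int N) (int M) g" "u = grid_embed a c g"
      using inside_box_iff[of u] u by blast
    then show ?thesis
      using deg_rewire[OF L1 sub] parity unfolding crossing_terminals_def by auto
  qed
  moreover have "\<forall>e\<in>rewire P h v. L1_edge e"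
    using L1 lift_edges_box_edge[OF sub] unfolding rewire_def box_edge_def by blast
  moreover have "e \<in> rewire P h v \<longleftrightarrow> e \<in> P" if "\<not> box_edge M N e" for e
    using that lift_edges_box_edge[OF sub] unfolding rewire_def by blast
  ultimately show ?thesis
    using same_contour_rewire[OF sub connected] by (intro exI[of _ "rewire P h v"]) blast
qed

end

theorem lemma4p2:
  fixes M N :: nat and P :: "(int \<times> int) set set"
  assumes "M \<ge> 3" and "N \<ge> 3"
    and "primal_contour_config P"
    and "even (card {e \<in> P. crossing_edge M N e})"
  shows "\<exists>P'. (\<forall>e\<in>P'. L1_edge e)
     \<and> (\<forall>e. \<not> box_edge M N e \<longrightarrow> (e \<in> P' \<longleftrightarrow> e \<in> P))
     \<and> (\<forall>e f. e \<in> P' \<and> crossing_edge M N e \<and> f \<in> P' \<and> crossing_edge M N f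
              \<longrightarrow> same_contour P' e f)
     \<and> (\<forall>v. inside_box M N v \<longrightarrow> even (deg P' v))"
proof -
  obtain a c where "even a" "even c"
    and "\<forall>v. inside_box M N v \<longleftrightarrow> (\<exists>g. grid_vertex (int N) (int M) g \<and> v = grid_embed a c g)"
    using inside_box_eq_grid_embed[of M N] assms(1,2) by auto
  then interpret grid_in_box M N a c
    by unfold_locales auto
  show ?thesis
    using rewiring_exists[OF assms] .
qed

end
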